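(* Let $M\ge 1$ and $\omega>0$ be such that $\|C(t)\|\le Me^{\omega|t|}$ for all $t\in\mathbb R$. Then the operators $$\mathcal T(t)=\begin{bmatrix} C(t)|_{\mathbb W} & S(t)\\ AS(t)|_{\mathbb W} & C(t)\end{bmatrix},\qquad t\in\mathbb R,$$ are bounded on $\mathbb W\times\mathbb X$ (normed by $\|(w,x)\|_{\mathbb W\times\mathbb X}=\|w\|_{\mathbb W}+\|x\|$) and $$\|\mathcal T(t)\|_{\mathcal B(\mathbb W\times\mathbb X)}\le M_1e^{\omega|t|}\quad\text{for all }t\in\mathbb R,\qquad M_1:=M\max\Big\{2+\frac{M}{\sinh(\omega/2)},\;1+\omega^{-1}+e^{\omega}\Big\}.$$
   Context: $\mathbb X$ is a complex Banach space with norm $\|\cdot\|$, and $A:\mathrm{dom}(A)\subseteq\mathbb X\to\mathbb X$ is the generator of a strongly continuous cosine family $\{C(t)\}_{t\in\mathbb R}\subset\mathcal B(\mathbb X)$: i.e. $t\mapsto C(t)x$ is continuous for each $x$, $C(0)=I$, $C(t+s)+C(t-s)=2C(t)C(s)$ for all $t,s$, and $A$ is the (closed, densely defined) operator with $\lambda(\lambda^2-A)^{-1}x=\int_0^\infty e^{-\lambda t}C(t)x\,dt$ for all sufficiently large $\lambda$. The associated sine family is $S(t)x=\int_0^tC(s)x\,ds$. The phase space is $\mathbb W=\{x\in\mathbb X: S(\cdot)x\in C([0,1],\mathrm{dom}(A))\}$ (where $\mathrm{dom}(A)$ carries the graph norm), with norm $\|x\|_{\mathbb W}=\|x\|+\sup_{0\le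 s\le 1}\|AS(s)x\|$. *)

theory Defs
  imports "HOL-Analysis.Analysis"
begin

definition cosine_family :: "(real \<Rightarrow> 'a::banach \<Rightarrow> 'a) \<Rightarrow> bool" where
  "cosine_family C \<longleftrightarrow>
     (\<forall>t. bounded_linear (C t)) \<and>
     (\<forall>x. continuous_on UNIV (\<lambda>t. C t x)) \<and>
     C 0 = id \<and>
     (\<forall>t s. \<forall>x. C (t + s) x + C (t - s) x = 2 *\<^sub>R C t (C s x))"

text \<open>\<open>(D, A)\<close> is the generator of \<open>C\<close>: for all sufficiently large \<open>\<lambda>\<close>,
  \<open>\<lambda>\<^sup>2 - A : D \<rightarrow> X\<close> is bijective and
  \<open>\<lambda> (\<lambda>\<^sup>2 - A)\<inverse> x = \<integral>\<^sub>0\<^sup>\<infinity> e\<^sup>-\<^sup>\<lambda>\<^sup>t C(t) x dt\<close>.\<close>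
definition cosine_generator ::
    "(real \<Rightarrow> 'a::banach \<Rightarrow> 'a) \<Rightarrow> 'a set \<Rightarrow> ('a \<Rightarrow> 'a) \<Rightarrow> bool" where
  "cosine_generator C D A \<longleftrightarrow>
     (\<exists>l0. \<forall>l>l0.
        (\<forall>y\<in>D. \<forall>z\<in>D. l\<^sup>2 *\<^sub>R y - A y = l\<^sup>2 *\<^sub>R z - A z \<longrightarrow> y = z) \<and>
        (\<forall>x. \<exists>y\<in>D. l\<^sup>2 *\<^sub>R y - A y = x \<and>
              ((\<lambda>t. exp (- l * t) *\<^sub>R C t x) has_integral (l *\<^sub>R y)) {0..}))"

definition sine_family :: "(real \<Rightarrow> 'a::banach \<Rightarrow> 'a) \<Rightarrow> real \<Rightarrow> 'a \<Rightarrow> 'a" where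
  "sine_family C t x =
     (if 0 \<le> t then integral {0..t} (\<lambda>s. C s x) else - integral {t..0} (\<lambda>s. C s x))"

text \<open>Phase space \<open>W = {x. S(\<cdot>)x \<in> C([0,1], dom A)}\<close>, dom A with the graph norm.\<close>
definition phase_space ::
    "(real \<Rightarrow> 'a::banach \<Rightarrow> 'a) \<Rightarrow> 'a set \<Rightarrow> ('a \<Rightarrow> 'a) \<Rightarrow> 'a set" where
  "phase_space C D A =
     {x. (\<forall>s\<in>{0..1}. sine_family C s x \<in> D) \<and>
         continuous_on {0..1} (\<lambda>s. sine_family C s x) \<and>
         continuous_on {0..1} (\<lambda>s. A (sine_family C s x))}"

definition phase_norm ::
    "(real \<Rightarrow> 'a::banach \<Rightarrow> 'a) \<Rightarrow> ('a \<Rightarrow> 'a) \<Rightarrow> 'a \<Rightarrow> real" where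
  "phase_norm C A x = norm x + (SUP s\<in>{0..1}. norm (A (sine_family C s x)))"

end

theory Submission
  imports Defs
begin

text \<open>Write \<open>V(u)x = \<integral>\<^sub>0\<^sup>u S(r)x dr\<close> (\<open>sine_primitive\<close>). The product formula
  \<open>S(s)S(t) = (V(t+s) - V(t-s))/2\<close> together with \<open>A V(u)x = C(u)x - x\<close>, which is read off from the
  Laplace transform of the cosine family, shows that \<open>S(s)(C(t)w + S(t)x)\<close> lies in the domain of
  \<open>A\<close> with an explicit image; this controls the first row of the matrix. For the second row one
  needs \<open>A S(t)w\<close> for all \<open>t\<close>, while \<open>w \<in> W\<close> only controls it for \<open>t \<in> [0,1]\<close>: the identity
  \<open>S(t) - S(t-1) = 2 C(t-1/2) S(1/2)\<close> propagates the bound in unit steps, and the resulting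
  geometric series \<open>\<Sum>\<^sub>k 2M exp(\<omega>(t - k - 1/2))\<close> is bounded by \<open>M exp(\<omega>t) / sinh(\<omega>/2)\<close>.\<close>

definition integral_from_0 :: "(real \<Rightarrow> 'a::banach) \<Rightarrow> real \<Rightarrow> 'a" where
  "integral_from_0 f t = (if 0 \<le> t then integral {0..t} f else - integral {t..0} f)"

lemma eq_if_same_vector_derivative:
  fixes f g :: "real \<Rightarrow> 'a::real_normed_vector"
  assumes "\<And>t. (f has_vector_derivative h t) (at t)"
    and "\<And>t. (g has_vector_derivative h t) (at t)"
    and "f 0 = g 0"
  shows "f t = g t"
proof -
  have "((\<lambda>t. f t - g t) has_derivative (\<lambda>h. 0)) (at s within UNIV)" for s
    using has_vector_derivative_diff[OF assms(1,2)] by (simp add: has_vector_derivative_def)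
  then have "f t - g t = f 0 - g 0"
    using has_derivative_zero_unique[of UNIV "\<lambda>t. f t - g t"] by blast
  then show ?thesis using assms(3) by simp
qed

lemma has_vector_derivative_integral_from_0:
  fixes f :: "real \<Rightarrow> 'a::banach"
  assumes "continuous_on UNIV f"
  shows "(integral_from_0 f has_vector_derivative f t) (at t)"
proof -
  define a where "a = - \<bar>t\<bar> - 1"
  define b where "b = \<bar>t\<bar> + 1"
  have "continuous_on {a..b} f"
    using assms by (rule continuous_on_subset) simp
  then have "((\<lambda>u. integral {a..u} f) has_vector_derivative f t) (at t within {a..b})"
    by (rule integral_has_vector_derivative) (auto simp: a_def b_def)
  moreover have "t \<in> interior {a..b}" by (auto simp: a_def b_def)
  ultimately have "((\<lambda>u. integral {a..u} f) has_vector_derivative f t) (at t)"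
    by (metis at_within_interior)
  then have "((\<lambda>u. integral {a..u} f - integral {a..0} f) has_vector_derivative f t) (at t)"
    by (rule derivative_eq_intros) auto
  then show ?thesis
  proof (rule has_vector_derivative_transform_within_open[of _ _ _ "{a<..<b}"])
    show "open {a<..<b}" by simp
    show "t \<in> {a<..<b}" by (auto simp: a_def b_def)
    fix y assume y: "y \<in> {a<..<b}"
    have "a \<le> 0" by (simp add: a_def)
    have integrable: "f integrable_on {a..max y 0}"
      by (rule integrable_continuous_real) (rule continuous_on_subset[OF assms], simp)
    show "integral {a..y} f - integral {a..0} f = integral_from_0 f y"
    proof (cases "0 \<le> y")
      case True
      then have "f integrable_on {a..y}" using integrable by (simp add: max_def)
      then have "integral {a..0} f + integral {0..y} f = integral {a..y} f"
        by (rule Henstock_Kurzweil_Integration.integral_combine[OF \<open>a \<le> 0\<close> True])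
      then show ?thesis using True by (simp add: integral_from_0_def algebra_simps)
    next
      case False
      then have "f integrable_on {a..0}" using integrable by (simp add: max_def)
      moreover have "a \<le> y" using y by simp
      ultimately have "integral {a..y} f + integral {y..0} f = integral {a..0} f"
        using False by (intro Henstock_Kurzweil_Integration.integral_combine) auto
      then show ?thesis using False by (simp add: integral_from_0_def algebra_simps)
    qed
  qed
qed

lemma has_integral_imp_tendsto_integral_at_top:
  fixes f :: "real \<Rightarrow> 'a::banach"
  assumes "(f has_integral I) {0..}"
  shows "((\<lambda>T. integral {0..T} f) \<longlongrightarrow> I) at_top"
proof (rule tendstoI)
  fix e :: real assume e: "e > 0"
  have unbounded: "\<nexists>a b. {0::real..} = cbox a b"
  proof
    assume "\<exists>a b. {0::real..} = cbox a b"
    then obtain a b :: real where ab: "{0..} = cbox a b" by blast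
    have "max b 0 + 1 \<in> {0::real..}" by simp
    then have "max b 0 + 1 \<in> cbox a b" by (simp only: ab)
    then show False by (simp add: max_def split: if_splits)
  qed
  obtain B where B: "B > 0"
    and approx: "\<forall>a b. ball 0 B \<subseteq> cbox a b \<longrightarrow>
      (\<exists>z. ((\<lambda>x. if x \<in> {0..} then f x else 0) has_integral z) (cbox a b) \<and> norm (z - I) < e)"
    using has_integral_altD[OF assms unbounded e] by blast
  show "\<forall>\<^sub>F T in at_top. dist (integral {0..T} f) I < e"
  proof (rule eventually_at_top_linorderI[of B])
    fix T assume T: "B \<le> T"
    then have "ball 0 B \<subseteq> cbox (- T) T" by (auto simp: dist_real_def)
    then obtain z where z: "((\<lambda>x. if x \<in> {0..} then f x else 0) has_integral z) (cbox (- T) T)"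
      and close: "norm (z - I) < e" using approx by blast
    have "z = integral (cbox (- T) T) (\<lambda>x. if x \<in> {0..} then f x else 0)"
      using z by (simp add: integral_unique)
    also have "\<dots> = integral ({0..} \<inter> cbox (- T) T) f"
      by (rule integral_restrict_Int)
    also have "{0..} \<inter> cbox (- T) T = {0..T}" using T B by auto
    finally show "dist (integral {0..T} f) I < e" using close by (simp add: dist_norm)
  qed
qed

lemma has_integral_at_top_eq_limit_diff:
  fixes F f :: "real \<Rightarrow> 'a::banach"
  assumes "\<And>t. 0 \<le> t \<Longrightarrow> (F has_vector_derivative f t) (at t)"
    and "(f has_integral I) {0..}" and "(F \<longlongrightarrow> L) at_top"
  shows "I = L - F 0"
proof -
  have "\<forall>\<^sub>F T in at_top. F T - F 0 = integral {0..T} f"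
  proof (rule eventually_at_top_linorderI)
    fix T :: real assume "0 \<le> T"
    then have "(f has_integral F T - F 0) {0..T}"
    proof (rule fundamental_theorem_of_calculus)
      fix s assume "s \<in> {0..T}"
      then have "(F has_vector_derivative f s) (at s)"
        by (intro assms(1)) simp
      then show "(F has_vector_derivative f s) (at s within {0..T})"
        by (rule has_vector_derivative_at_within)
    qed
    then show "F T - F 0 = integral {0..T} f" by (simp add: integral_unique)
  qed
  then have "((\<lambda>T. integral {0..T} f) \<longlongrightarrow> L - F 0) at_top"
    by (rule Lim_transform_eventually[OF tendsto_diff[OF assms(3) tendsto_const]])
  then show ?thesis
    using tendsto_unique[OF trivial_limit_at_top_linorder
        has_integral_imp_tendsto_integral_at_top[OF assms(2)]] by simp
qed

lemma tendsto_exp_weighted_zero: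
  fixes f :: "real \<Rightarrow> 'a::real_normed_vector"
  assumes "\<And>T. 0 \<le> T \<Longrightarrow> norm (f T) \<le> K * exp (\<omega> * T)" and "\<omega> < \<mu>"
  shows "((\<lambda>T. exp (- \<mu> * T) *\<^sub>R f T) \<longlongrightarrow> 0) at_top"
proof (rule Lim_null_comparison)
  show "\<forall>\<^sub>F T in at_top. norm (exp (- \<mu> * T) *\<^sub>R f T) \<le> K * exp ((\<omega> - \<mu>) * T)"
  proof (rule eventually_at_top_linorderI)
    fix T :: real assume "0 \<le> T"
    then have "exp (- \<mu> * T) * norm (f T) \<le> exp (- \<mu> * T) * (K * exp (\<omega> * T))"
      using assms(1) by (intro mult_left_mono) auto
    then show "norm (exp (- \<mu> * T) *\<^sub>R f T) \<le> K * exp ((\<omega> - \<mu>) * T)"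
      by (simp add: algebra_simps flip: exp_add)
  qed
  have "filterlim (\<lambda>T. (\<omega> - \<mu>) * T) at_bot at_top"
    using assms(2) by (intro filterlim_tendsto_neg_mult_at_bot[OF tendsto_const _ filterlim_ident]) simp
  then show "((\<lambda>T. K * exp ((\<omega> - \<mu>) * T)) \<longlongrightarrow> 0) at_top"
    by (rule tendsto_mult_right_zero[OF filterlim_compose[OF exp_at_bot]])
qed

lemma sinh_geometric_step:
  fixes M \<omega> t :: real
  assumes "\<omega> > 0"
  shows "M / sinh (\<omega> / 2) * exp (\<omega> * (t - 1)) + 2 * M * exp (\<omega> * (t - 1/2))
    = M / sinh (\<omega> / 2) * exp (\<omega> * t)"
proof -
  define q where "q = exp (\<omega> / 2)"
  define e where "e = exp (\<omega> * (t - 1))"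
  have "sinh (\<omega> / 2) > 0" using assms by simp
  have "2 * q * sinh (\<omega> / 2) = q * q - 1"
    by (simp add: sinh_def q_def exp_minus field_simps flip: exp_add)
  have "exp (\<omega> * (t - 1/2)) = e * q" "exp (\<omega> * t) = e * q * q"
    by (simp_all add: e_def q_def algebra_simps flip: exp_add)
  then have "M / sinh (\<omega> / 2) * exp (\<omega> * (t - 1)) + 2 * M * exp (\<omega> * (t - 1/2))
      = M / sinh (\<omega> / 2) * e * (1 + 2 * q * sinh (\<omega> / 2))"
    using \<open>sinh (\<omega> / 2) > 0\<close> by (simp add: e_def field_simps)
  also have "\<dots> = M / sinh (\<omega> / 2) * exp (\<omega> * t)"
    using \<open>2 * q * sinh (\<omega> / 2) = q * q - 1\<close> \<open>exp (\<omega> * t) = e * q * q\<close> by simp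
  finally show ?thesis .
qed

locale cosine_operator_family =
  fixes C :: "real \<Rightarrow> 'a::banach \<Rightarrow> 'a"
  assumes cosine_family: "cosine_family C"
begin

abbreviation S :: "real \<Rightarrow> 'a \<Rightarrow> 'a" where "S \<equiv> sine_family C"

lemma cosine_bounded_linear: "bounded_linear (C t)"
  using cosine_family by (simp add: cosine_family_def)

lemmas cosine_linear_simps[simp] = linear_simps[OF cosine_bounded_linear]

lemma cosine_at_0[simp]: "C 0 x = x"
  using cosine_family by (simp add: cosine_family_def)

lemma dalembert: "C (t + s) x + C (t - s) x = 2 *\<^sub>R C t (C s x)"
  using cosine_family by (simp add: cosine_family_def)

lemma cosine_minus: "C (- t) x = C t x"
  using dalembert[of 0 t x] by (simp add: scaleR_2)

lemma cosine_commute: "C t (C s x) = C s (C t x)"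
  using dalembert[of t s x] dalembert[of s t x] cosine_minus[of "s - t" x]
  by (simp add: add.commute)

lemma cosine_cosine: "C s (C t x) = (1/2) *\<^sub>R (C (t + s) x + C (t - s) x)"
  by (simp add: dalembert cosine_commute[of s t])

lemma continuous_on_cosine: "continuous_on UNIV (\<lambda>t. C t x)"
  using cosine_family by (simp add: cosine_family_def)

lemma continuous_on_cosine_compose[continuous_intros]:
  "continuous_on T f \<Longrightarrow> continuous_on T (\<lambda>s. C (f s) x)"
  using continuous_on_compose2[OF continuous_on_cosine] by blast

lemma has_vector_derivative_cosine_apply[derivative_intros]:
  "(g has_vector_derivative g') F \<Longrightarrow> ((\<lambda>t. C s (g t)) has_vector_derivative C s g') F"
  by (rule bounded_linear.has_vector_derivative[OF cosine_bounded_linear])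

lemma sine_eq_integral_from_0: "(\<lambda>t. S t x) = integral_from_0 (\<lambda>s. C s x)"
  by (simp add: fun_eq_iff sine_family_def integral_from_0_def)

lemma has_vector_derivative_sine: "((\<lambda>t. S t x) has_vector_derivative C t x) (at t)"
  unfolding sine_eq_integral_from_0 by (rule has_vector_derivative_integral_from_0[OF continuous_on_cosine])

lemma has_vector_derivative_sine_compose[derivative_intros]:
  "(f has_real_derivative f') (at t) \<Longrightarrow>
    ((\<lambda>t. S (f t) x) has_vector_derivative f' *\<^sub>R C (f t) x) (at t)"
  using vector_diff_chain_at[OF _ has_vector_derivative_sine, of f f' t]
  by (simp add: has_real_derivative_iff_has_vector_derivative comp_def)

lemma sine_at_0[simp]: "S 0 x = 0"
  by (simp add: sine_family_def)

lemma continuous_on_sine: "continuous_on T (\<lambda>t. S t x)"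
  by (intro continuous_at_imp_continuous_on ballI
      has_vector_derivative_continuous[OF has_vector_derivative_sine])

lemma sine_minus: "S (- t) x = - S t x"
  by (rule eq_if_same_vector_derivative[where h="\<lambda>t. - C t x"])
    (auto intro!: derivative_eq_intros simp: cosine_minus)

lemma sine_add: "S t (x + y) = S t x + S t y"
  by (rule eq_if_same_vector_derivative[where h="\<lambda>t. C t x + C t y"])
    (auto intro!: derivative_eq_intros)

lemma cosine_sine: "C s (S t x) = (1/2) *\<^sub>R (S (t + s) x + S (t - s) x)"
  by (rule eq_if_same_vector_derivative[where f="\<lambda>t. C s (S t x)"
        and g="\<lambda>t. (1/2) *\<^sub>R (S (t + s) x + S (t - s) x)" and h="\<lambda>t. C s (C t x)"])
    (auto intro!: derivative_eq_intros simp: sine_minus cosine_cosine)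

lemma sine_cosine_commute: "S t (C s x) = C s (S t x)"
  by (rule eq_if_same_vector_derivative[where h="\<lambda>t. C s (C t x)"])
    (auto intro!: derivative_eq_intros simp: cosine_commute)

lemma sine_shift: "S (t + h) x - S (t - h) x = 2 *\<^sub>R C t (S h x)"
  using cosine_sine[of t h x] sine_minus[of "t - h" x] by (simp add: add.commute)

definition sine_primitive :: "real \<Rightarrow> 'a \<Rightarrow> 'a" where
  "sine_primitive u x = integral_from_0 (\<lambda>r. S r x) u"

lemma has_vector_derivative_sine_primitive:
  "((\<lambda>u. sine_primitive u x) has_vector_derivative S u x) (at u)"
  using has_vector_derivative_integral_from_0[OF continuous_on_sine]
  by (simp add: sine_primitive_def[abs_def])

lemma has_vector_derivative_sine_primitive_compose[derivative_intros]:
  "(f has_real_derivative f') (at t) \<Longrightarrow>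
    ((\<lambda>t. sine_primitive (f t) x) has_vector_derivative f' *\<^sub>R S (f t) x) (at t)"
  using vector_diff_chain_at[OF _ has_vector_derivative_sine_primitive, of f f' t]
  by (simp add: has_real_derivative_iff_has_vector_derivative comp_def)

lemma sine_primitive_at_0[simp]: "sine_primitive 0 x = 0"
  by (simp add: sine_primitive_def integral_from_0_def)

lemma sine_primitive_minus: "sine_primitive (- u) x = sine_primitive u x"
  by (rule eq_if_same_vector_derivative[where f="\<lambda>u. sine_primitive (- u) x"
        and g="\<lambda>u. sine_primitive u x" and h="\<lambda>u. S u x"])
    (auto intro!: derivative_eq_intros simp: sine_minus)

lemma cosine_sine_primitive:
  "C s (sine_primitive u x)
    = (1/2) *\<^sub>R (sine_primitive (u + s) x + sine_primitive (u - s) x) - sine_primitive s x"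
  by (rule eq_if_same_vector_derivative[where f="\<lambda>u. C s (sine_primitive u x)"
        and g="\<lambda>u. (1/2) *\<^sub>R (sine_primitive (u + s) x + sine_primitive (u - s) x)
          - sine_primitive s x" and h="\<lambda>u. C s (S u x)"])
    (auto intro!: derivative_eq_intros simp: cosine_sine sine_primitive_minus)

lemma sine_sine: "S s (S t x) = (1/2) *\<^sub>R (sine_primitive (t + s) x - sine_primitive (t - s) x)"
  by (rule eq_if_same_vector_derivative[where h="\<lambda>s. C s (S t x)"])
    (auto intro!: derivative_eq_intros simp: cosine_sine algebra_simps)

end

locale exp_bounded_cosine_family = cosine_operator_family +
  fixes M \<omega> :: real
  assumes omega_pos: "\<omega> > 0"
    and onorm_cosine_le: "\<forall>t. onorm (C t) \<le> M * exp (\<omega> * \<bar>t\<bar>)"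
begin

lemma norm_cosine_le: "norm (C t x) \<le> M * exp (\<omega> * \<bar>t\<bar>) * norm x"
proof -
  have "norm (C t x) \<le> onorm (C t) * norm x"
    by (rule onorm[OF cosine_bounded_linear])
  also have "\<dots> \<le> M * exp (\<omega> * \<bar>t\<bar>) * norm x"
    using onorm_cosine_le by (intro mult_right_mono) auto
  finally show ?thesis .
qed

lemma M_nonneg: "M \<ge> 0"
  using onorm_pos_le[OF cosine_bounded_linear, of 0] onorm_cosine_le[rule_format, of 0] by simp

lemma norm_sine_le: "norm (S t x) \<le> M / \<omega> * exp (\<omega> * \<bar>t\<bar>) * norm x"
proof -
  have "norm (S t x) \<le> M / \<omega> * exp (\<omega> * t) * norm x" if t: "0 \<le> t" for t
  proof -
    let ?G = "\<lambda>s. M / \<omega> * exp (\<omega> * s) * norm x"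
    have G: "((\<lambda>s. M * exp (\<omega> * s) * norm x) has_integral ?G t - ?G 0) {0..t}"
      using t omega_pos
      by (intro fundamental_theorem_of_calculus)
        (auto intro!: derivative_eq_intros simp flip: has_real_derivative_iff_has_vector_derivative)
    have "norm (C s x) \<le> M * exp (\<omega> * s) * norm x" if "s \<in> {0..t}" for s
      using norm_cosine_le[of s x] that by simp
    then have "norm (integral {0..t} (\<lambda>s. C s x)) \<le> integral {0..t} (\<lambda>s. M * exp (\<omega> * s) * norm x)"
      using G by (intro integral_norm_bound_integral integrable_continuous_real continuous_intros) auto
    also have "\<dots> = ?G t - ?G 0"
      using G by (rule integral_unique)
    also have "\<dots> \<le> ?G t"
      using M_nonneg omega_pos by simp
    finally show ?thesis
      using t by (simp add: sine_family_def)
  qed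
  from this[of t] this[of "- t"] show ?thesis
    by (cases "0 \<le> t") (auto simp: sine_minus[of "- t", simplified])
qed

lemma norm_sine_add_le:
  "norm (S (u + r) x) \<le> M / \<omega> * exp (\<omega> * \<bar>u\<bar>) * exp (\<omega> * \<bar>r\<bar>) * norm x"
proof -
  have "\<omega> * \<bar>u + r\<bar> \<le> \<omega> * (\<bar>u\<bar> + \<bar>r\<bar>)"
    using omega_pos abs_triangle_ineq[of u r] by (intro mult_left_mono) auto
  then have "exp (\<omega> * \<bar>u + r\<bar>) \<le> exp (\<omega> * \<bar>u\<bar>) * exp (\<omega> * \<bar>r\<bar>)"
    by (simp add: distrib_left flip: exp_add)
  then have "M / \<omega> * exp (\<omega> * \<bar>u + r\<bar>) * norm x
      \<le> M / \<omega> * (exp (\<omega> * \<bar>u\<bar>) * exp (\<omega> * \<bar>r\<bar>)) * norm x"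
    using M_nonneg omega_pos by (intro mult_right_mono mult_left_mono) auto
  then show ?thesis
    using norm_sine_le[of "u + r" x] by (simp add: mult.assoc)
qed

end

locale cosine_resolvent = exp_bounded_cosine_family +
  fixes D :: "'a set" and A :: "'a \<Rightarrow> 'a" and \<mu> :: real
  assumes omega_less_mu: "\<omega> < \<mu>"
    and resolvent_inj: "\<forall>y\<in>D. \<forall>z\<in>D. \<mu>\<^sup>2 *\<^sub>R y - A y = \<mu>\<^sup>2 *\<^sub>R z - A z \<longrightarrow> y = z"
    and resolvent_laplace: "\<forall>x. \<exists>y\<in>D. \<mu>\<^sup>2 *\<^sub>R y - A y = x \<and>
          ((\<lambda>t. exp (- \<mu> * t) *\<^sub>R C t x) has_integral (\<mu> *\<^sub>R y)) {0..}"
begin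

lemma mu_pos: "\<mu> > 0"
  using omega_pos omega_less_mu by simp

definition resolvent :: "'a \<Rightarrow> 'a" where
  "resolvent x = (1 / \<mu>) *\<^sub>R integral {0..} (\<lambda>t. exp (- \<mu> * t) *\<^sub>R C t x)"

lemma resolvent_unique:
  assumes "((\<lambda>t. exp (- \<mu> * t) *\<^sub>R C t x) has_integral (\<mu> *\<^sub>R y)) {0..}"
  shows "resolvent x = y"
  using integral_unique[OF assms] mu_pos by (simp add: resolvent_def)

lemma
  shows resolvent_in_domain: "resolvent x \<in> D"
    and resolvent_right_inverse: "\<mu>\<^sup>2 *\<^sub>R resolvent x - A (resolvent x) = x"
    and has_integral_laplace:
      "((\<lambda>t. exp (- \<mu> * t) *\<^sub>R C t x) has_integral (\<mu> *\<^sub>R resolvent x)) {0..}"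
proof -
  obtain y where "y \<in> D" "\<mu>\<^sup>2 *\<^sub>R y - A y = x"
    and laplace: "((\<lambda>t. exp (- \<mu> * t) *\<^sub>R C t x) has_integral (\<mu> *\<^sub>R y)) {0..}"
    using resolvent_laplace by blast
  moreover have "resolvent x = y"
    using laplace by (rule resolvent_unique)
  ultimately show "resolvent x \<in> D" "\<mu>\<^sup>2 *\<^sub>R resolvent x - A (resolvent x) = x"
    "((\<lambda>t. exp (- \<mu> * t) *\<^sub>R C t x) has_integral (\<mu> *\<^sub>R resolvent x)) {0..}"
    by simp_all
qed

lemma generator_resolvent: "A (resolvent x) = \<mu>\<^sup>2 *\<^sub>R resolvent x - x"
  using resolvent_right_inverse[of x] by (simp add: algebra_simps)

lemma resolvent_left_inverse: "y \<in> D \<Longrightarrow> resolvent (\<mu>\<^sup>2 *\<^sub>R y - A y) = y"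
  by (rule resolvent_inj[rule_format]) (simp_all add: resolvent_in_domain resolvent_right_inverse)

lemma domain_eq_range_resolvent: "D = range resolvent"
proof
  show "D \<subseteq> range resolvent"
    using resolvent_left_inverse by (metis range_eqI subsetI)
qed (auto simp: resolvent_in_domain)

lemma resolvent_add: "resolvent (x + y) = resolvent x + resolvent y"
  by (rule resolvent_unique)
    (use has_integral_add[OF has_integral_laplace[of x] has_integral_laplace[of y]] in
      \<open>simp add: algebra_simps\<close>)

lemma resolvent_scaleR: "resolvent (c *\<^sub>R x) = c *\<^sub>R resolvent x"
  by (rule resolvent_unique)
    (use has_integral_cmul[OF has_integral_laplace[of x], of c] in \<open>simp add: algebra_simps\<close>)

lemma resolvent_diff: "resolvent (x - y) = resolvent x - resolvent y"
  using resolvent_add[of x "(-1) *\<^sub>R y"] resolvent_scaleR[of "-1" y] by simp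

lemma resolvent_cosine: "resolvent (C s x) = C s (resolvent x)"
proof (rule resolvent_unique)
  show "((\<lambda>t. exp (- \<mu> * t) *\<^sub>R C t (C s x)) has_integral \<mu> *\<^sub>R C s (resolvent x)) {0..}"
    using has_integral_linear[OF has_integral_laplace[of x] cosine_bounded_linear[of s]]
    by (simp add: comp_def cosine_commute)
qed

lemma
  assumes "y \<in> D" and "z \<in> D"
  shows domain_add: "y + z \<in> D" and generator_add: "A (y + z) = A y + A z"
proof -
  obtain x x' where y: "y = resolvent x" and z: "z = resolvent x'"
    using assms by (auto simp: domain_eq_range_resolvent)
  then have sum: "y + z = resolvent (x + x')"
    by (simp add: resolvent_add)
  then show "y + z \<in> D"
    by (simp add: resolvent_in_domain)
  show "A (y + z) = A y + A z"
    unfolding sum unfolding y z generator_resolvent by (simp add: resolvent_add algebra_simps)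
qed

lemma
  assumes "y \<in> D"
  shows domain_scaleR: "c *\<^sub>R y \<in> D" and generator_scaleR: "A (c *\<^sub>R y) = c *\<^sub>R A y"
proof -
  obtain x where y: "y = resolvent x"
    using assms by (auto simp: domain_eq_range_resolvent)
  then have scaled: "c *\<^sub>R y = resolvent (c *\<^sub>R x)"
    by (simp add: resolvent_scaleR)
  then show "c *\<^sub>R y \<in> D"
    by (simp add: resolvent_in_domain)
  show "A (c *\<^sub>R y) = c *\<^sub>R A y"
    unfolding scaled unfolding y generator_resolvent by (simp add: resolvent_scaleR algebra_simps)
qed

lemma
  assumes "y \<in> D" and "z \<in> D"
  shows domain_diff: "y - z \<in> D" and generator_diff: "A (y - z) = A y - A z"
  using domain_add[of y "(-1) *\<^sub>R z"] generator_add[of y "(-1) *\<^sub>R z"]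
    domain_scaleR[of z "-1"] generator_scaleR[of z "-1"] assms by auto

lemma
  assumes "y \<in> D"
  shows domain_cosine: "C s y \<in> D" and generator_cosine: "A (C s y) = C s (A y)"
proof -
  obtain x where "y = resolvent x"
    using assms by (auto simp: domain_eq_range_resolvent)
  then show "C s y \<in> D" "A (C s y) = C s (A y)"
    by (simp_all add: resolvent_cosine[symmetric] resolvent_in_domain generator_resolvent)
qed

text \<open>Two integrations by parts in the Laplace transform of \<open>C(\<cdot>)z = (C(\<cdot>)w)''\<close>.\<close>

lemma resolvent_if_cosine_twice_differentiable:
  assumes dC: "\<And>s. ((\<lambda>s. C s w) has_vector_derivative p s) (at s)"
    and dp: "\<And>s. (p has_vector_derivative C s z) (at s)"
    and "p 0 = 0"
    and p_le: "\<And>s. s \<ge> 0 \<Longrightarrow> norm (p s) \<le> K * exp (\<omega> * s)"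
  shows "resolvent (\<mu>\<^sup>2 *\<^sub>R w - z) = w"
proof -
  define \<Phi> where "\<Phi> s = exp (- \<mu> * s) *\<^sub>R (p s + \<mu> *\<^sub>R C s w)" for s
  have derivative: "(\<Phi> has_vector_derivative
      exp (- \<mu> * s) *\<^sub>R C s z - \<mu>\<^sup>2 *\<^sub>R (exp (- \<mu> * s) *\<^sub>R C s w)) (at s)" for s
    unfolding \<Phi>_def
    by (rule has_vector_derivative_eq_rhs, (auto intro!: derivative_eq_intros dC dp)[1])
      (simp add: algebra_simps power2_eq_square)
  have integral: "((\<lambda>s. exp (- \<mu> * s) *\<^sub>R C s z - \<mu>\<^sup>2 *\<^sub>R (exp (- \<mu> * s) *\<^sub>R C s w))
      has_integral (\<mu> *\<^sub>R resolvent z - \<mu>\<^sup>2 *\<^sub>R (\<mu> *\<^sub>R resolvent w))) {0..}"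
    by (intro has_integral_diff has_integral_cmul has_integral_laplace)
  have limit: "(\<Phi> \<longlongrightarrow> 0) at_top"
    unfolding \<Phi>_def
  proof (rule tendsto_exp_weighted_zero[OF _ omega_less_mu])
    fix T :: real assume T: "0 \<le> T"
    have "norm (p T + \<mu> *\<^sub>R C T w) \<le> norm (p T) + \<mu> * norm (C T w)"
      using norm_triangle_ineq[of "p T" "\<mu> *\<^sub>R C T w"] mu_pos by simp
    also have "\<dots> \<le> K * exp (\<omega> * T) + \<mu> * (M * exp (\<omega> * T) * norm w)"
      using p_le[OF T] norm_cosine_le[of T w] T mu_pos by (intro add_mono mult_left_mono) auto
    also have "\<dots> = (K + \<mu> * M * norm w) * exp (\<omega> * T)"
      by (simp add: algebra_simps)
    finally show "norm (p T + \<mu> *\<^sub>R C T w) \<le> (K + \<mu> * M * norm w) * exp (\<omega> * T)" .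
  qed
  have "\<mu> *\<^sub>R resolvent z - \<mu>\<^sup>2 *\<^sub>R (\<mu> *\<^sub>R resolvent w) = 0 - \<Phi> 0"
    by (rule has_integral_at_top_eq_limit_diff[OF _ integral limit]) (rule derivative)
  then have scaled: "\<mu> *\<^sub>R (w + resolvent z) = \<mu> *\<^sub>R (\<mu>\<^sup>2 *\<^sub>R resolvent w)"
    using \<open>p 0 = 0\<close> by (simp add: \<Phi>_def algebra_simps)
  have "w + resolvent z = (1 / \<mu>) *\<^sub>R (\<mu> *\<^sub>R (w + resolvent z))"
    using mu_pos by simp
  also have "\<dots> = \<mu>\<^sup>2 *\<^sub>R resolvent w"
    unfolding scaled using mu_pos by simp
  finally have "w = \<mu>\<^sup>2 *\<^sub>R resolvent w - resolvent z"
    by (simp add: eq_diff_eq)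
  also have "\<dots> = resolvent (\<mu>\<^sup>2 *\<^sub>R w - z)"
    by (simp add: resolvent_diff resolvent_scaleR)
  finally show ?thesis
    by (rule sym)
qed

lemma
  assumes "\<And>s. ((\<lambda>s. C s w) has_vector_derivative p s) (at s)"
    and "\<And>s. (p has_vector_derivative C s z) (at s)"
    and "p 0 = 0"
    and "\<And>s. s \<ge> 0 \<Longrightarrow> norm (p s) \<le> K * exp (\<omega> * s)"
  shows domain_if_cosine_twice_differentiable: "w \<in> D"
    and generator_if_cosine_twice_differentiable: "A w = z"
proof -
  define y where "y = \<mu>\<^sup>2 *\<^sub>R w - z"
  have w: "w = resolvent y"
    unfolding y_def by (rule sym, rule resolvent_if_cosine_twice_differentiable[OF assms])
  show "w \<in> D"
    unfolding w by (rule resolvent_in_domain)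
  have "A w = \<mu>\<^sup>2 *\<^sub>R w - y"
    unfolding w by (rule generator_resolvent)
  then show "A w = z"
    by (simp add: y_def)
qed

lemma sine_primitive_in_domain: "sine_primitive u x \<in> D"
  and generator_sine_primitive: "A (sine_primitive u x) = C u x - x"
proof -
  let ?p = "\<lambda>s. (1/2) *\<^sub>R (S (u + s) x - S (u - s) x) - S s x"
  have p_le: "norm (?p s) \<le> M / \<omega> * norm x * (exp (\<omega> * \<bar>u\<bar>) + 1) * exp (\<omega> * s)"
    if s: "0 \<le> s" for s
  proof -
    have "norm (?p s) \<le> (1/2) * (norm (S (u + s) x) + norm (S (u - s) x)) + norm (S s x)"
      by (rule order_trans[OF norm_triangle_ineq4]) (simp add: norm_triangle_ineq4)
    also have "\<dots> \<le> (1/2) * (M / \<omega> * exp (\<omega> * \<bar>u\<bar>) * exp (\<omega> * s) * norm x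
        + M / \<omega> * exp (\<omega> * \<bar>u\<bar>) * exp (\<omega> * s) * norm x) + M / \<omega> * exp (\<omega> * s) * norm x"
      using norm_sine_add_le[of u s x] norm_sine_add_le[of u "- s" x] norm_sine_le[of s x] s
      by (intro add_mono mult_left_mono) auto
    also have "\<dots> = M / \<omega> * norm x * (exp (\<omega> * \<bar>u\<bar>) + 1) * exp (\<omega> * s)"
      by (simp add: algebra_simps)
    finally show ?thesis .
  qed
  have dV: "((\<lambda>s. C s (sine_primitive u x)) has_vector_derivative ?p s) (at s)" for s
    unfolding cosine_sine_primitive by (auto intro!: derivative_eq_intros)
  have dp: "(?p has_vector_derivative C s (C u x - x)) (at s)" for s
    by (auto intro!: derivative_eq_intros simp: cosine_cosine algebra_simps)
  have p0: "?p 0 = 0"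
    by simp
  show "sine_primitive u x \<in> D" and "A (sine_primitive u x) = C u x - x"
    using domain_if_cosine_twice_differentiable[OF dV dp p0 p_le]
      generator_if_cosine_twice_differentiable[OF dV dp p0 p_le]
    by simp_all
qed

lemma sine_sine_in_domain: "S s (S t x) \<in> D"
  and generator_sine_sine: "A (S s (S t x)) = (1/2) *\<^sub>R (C (t + s) x - C (t - s) x)"
  by (simp_all add: sine_sine domain_scaleR domain_diff sine_primitive_in_domain
      generator_scaleR generator_diff generator_sine_primitive)

lemma
  assumes "S h w \<in> D" and "S (t - h) w \<in> D"
  shows sine_shift_in_domain: "S (t + h) w \<in> D"
    and generator_sine_shift: "A (S (t + h) w) = A (S (t - h) w) + 2 *\<^sub>R C t (A (S h w))"
proof -
  have "S (t + h) w = S (t - h) w + 2 *\<^sub>R C t (S h w)"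
    using sine_shift[of t h w] by (simp add: algebra_simps)
  then show "S (t + h) w \<in> D"
    and "A (S (t + h) w) = A (S (t - h) w) + 2 *\<^sub>R C t (A (S h w))"
    using assms by (simp_all add: domain_add domain_scaleR domain_cosine generator_add
        generator_scaleR generator_cosine)
qed

definition phase_seminorm :: "'a \<Rightarrow> real" where
  "phase_seminorm w = (SUP s\<in>{0..1}. norm (A (S s w)))"

lemma phase_norm_eq: "phase_norm C A w = norm w + phase_seminorm w"
  by (simp add: phase_norm_def phase_seminorm_def)

lemma
  assumes "w \<in> phase_space C D A"
  shows norm_generator_sine_le_phase_seminorm:
      "s \<in> {0..1} \<Longrightarrow> norm (A (S s w)) \<le> phase_seminorm w"
    and phase_seminorm_nonneg: "phase_seminorm w \<ge> 0"
proof -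
  have "continuous_on {0..1} (\<lambda>s. norm (A (S s w)))"
    using assms by (auto simp: phase_space_def intro: continuous_on_norm)
  then have "bdd_above ((\<lambda>s. norm (A (S s w))) ` {0..1})"
    by (intro bounded_imp_bdd_above compact_imp_bounded compact_continuous_image) simp_all
  then show le: "norm (A (S s w)) \<le> phase_seminorm w" if "s \<in> {0..1}" for s
    unfolding phase_seminorm_def using that by (rule cSUP_upper2) simp
  show "phase_seminorm w \<ge> 0"
    using order_trans[OF norm_ge_zero le[of 0]] by simp
qed

lemma sine_phase_bound_nonneg:
  assumes w: "w \<in> phase_space C D A" and "0 \<le> t"
  shows "S t w \<in> D \<and>
    norm (A (S t w)) \<le> phase_seminorm w * (1 + M / sinh (\<omega> / 2) * (exp (\<omega> * t) - 1))"
    (is "?Q t")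
proof -
  let ?P = "phase_seminorm w" and ?c = "M / sinh (\<omega> / 2)"
  have P_nonneg: "?P \<ge> 0" and c_nonneg: "?c \<ge> 0"
    using phase_seminorm_nonneg[OF w] M_nonneg omega_pos by simp_all
  have base: "?Q t" if t: "t \<in> {0..1}" for t
  proof
    show "S t w \<in> D" using w t by (simp add: phase_space_def)
    have "0 \<le> ?c * (exp (\<omega> * t) - 1)"
      by (rule mult_nonneg_nonneg[OF c_nonneg]) (use t omega_pos in simp)
    then have "?P \<le> ?P * (1 + ?c * (exp (\<omega> * t) - 1))"
      using P_nonneg by (simp add: mult_le_cancel_left1)
    then show "norm (A (S t w)) \<le> ?P * (1 + ?c * (exp (\<omega> * t) - 1))"
      using norm_generator_sine_le_phase_seminorm[OF w t] by linarith
  qed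
  have regroup: "P * (1 + c * (a - 1)) + b * P = P * (1 + c * (d - 1))"
    if "c * a + b = c * d" for P c a b d :: real
  proof -
    have "P * (1 + c * (a - 1)) + b * P = P * (1 - c) + P * (c * a + b)"
      by (simp add: algebra_simps)
    also have "\<dots> = P * (1 - c) + P * (c * d)"
      using that by simp
    finally show ?thesis
      by (simp add: algebra_simps)
  qed
  have step: "?Q t" if "1 \<le> t" and IH: "?Q (t - 1)" for t
  proof -
    have half: "S (1/2) w \<in> D" using w by (simp add: phase_space_def)
    then have "S t w \<in> D"
      and A_eq: "A (S t w) = A (S (t - 1) w) + 2 *\<^sub>R C (t - 1/2) (A (S (1/2) w))"
      using sine_shift_in_domain[of "1/2" w "t - 1/2"] generator_sine_shift[of "1/2" w "t - 1/2"] IH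
      by simp_all
    have "norm (C (t - 1/2) (A (S (1/2) w))) \<le> M * exp (\<omega> * (t - 1/2)) * ?P"
      using norm_cosine_le[of "t - 1/2" "A (S (1/2) w)"] M_nonneg \<open>1 \<le> t\<close>
        norm_generator_sine_le_phase_seminorm[OF w, of "1/2"]
      by (simp add: order_trans mult_left_mono)
    then have "norm (A (S t w)) \<le> ?P * (1 + ?c * (exp (\<omega> * (t - 1)) - 1))
        + 2 * M * exp (\<omega> * (t - 1/2)) * ?P"
      using A_eq IH norm_triangle_ineq[of "A (S (t - 1) w)" "2 *\<^sub>R C (t - 1/2) (A (S (1/2) w))"]
      by simp
    also have "\<dots> = ?P * (1 + ?c * (exp (\<omega> * t) - 1))"
      by (rule regroup[OF sinh_geometric_step[OF omega_pos]])
    finally show ?thesis using \<open>S t w \<in> D\<close> by simp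
  qed
  obtain n :: nat where "t \<le> n"
    using real_arch_simple by blast
  then have "t \<le> n + 1" by simp
  then show ?thesis using \<open>0 \<le> t\<close>
  proof (induction n arbitrary: t)
    case 0
    then show ?case using base by simp
  next
    case (Suc n)
    show ?case
    proof (cases "t \<le> 1")
      case True
      then show ?thesis using Suc.prems by (intro base) simp
    next
      case False
      then show ?thesis using Suc step[of t] by simp
    qed
  qed
qed

lemma
  assumes "w \<in> phase_space C D A"
  shows sine_phase_in_domain: "S t w \<in> D"
    and norm_generator_sine_phase_le:
      "norm (A (S t w)) \<le> (1 + M / sinh (\<omega> / 2) * exp (\<omega> * \<bar>t\<bar>)) * phase_seminorm w"
proof -
  let ?P = "phase_seminorm w" and ?c = "M / sinh (\<omega> / 2)"
  have "S \<bar>t\<bar> w \<in> D"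
    and bound: "norm (A (S \<bar>t\<bar> w)) \<le> ?P * (1 + ?c * (exp (\<omega> * \<bar>t\<bar>) - 1))"
    using sine_phase_bound_nonneg[OF assms, of "\<bar>t\<bar>"] by simp_all
  have reflected: "S t w \<in> D \<and> norm (A (S t w)) = norm (A (S \<bar>t\<bar> w))"
  proof (cases "0 \<le> t")
    case True
    then show ?thesis using \<open>S \<bar>t\<bar> w \<in> D\<close> by simp
  next
    case False
    then have "S t w = (-1) *\<^sub>R S \<bar>t\<bar> w"
      using sine_minus[of "\<bar>t\<bar>" w] by simp
    then show ?thesis
      using domain_scaleR[OF \<open>S \<bar>t\<bar> w \<in> D\<close>, of "-1"]
        generator_scaleR[OF \<open>S \<bar>t\<bar> w \<in> D\<close>, of "-1"]
      by simp
  qed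
  then show "S t w \<in> D" by simp
  have "0 \<le> ?c * ?P"
    using M_nonneg omega_pos phase_seminorm_nonneg[OF assms] by simp
  moreover have "P * (1 + c * (e - 1)) \<le> (1 + c * e) * P" if "0 \<le> c * P" for P c e :: real
    using that by (simp add: algebra_simps)
  ultimately have "?P * (1 + ?c * (exp (\<omega> * \<bar>t\<bar>) - 1)) \<le> (1 + ?c * exp (\<omega> * \<bar>t\<bar>)) * ?P"
    by blast
  then show "norm (A (S t w)) \<le> (1 + ?c * exp (\<omega> * \<bar>t\<bar>)) * ?P"
    using reflected bound by linarith
qed

lemma
  assumes "S s w \<in> D"
  shows sine_orbit_in_domain: "S s (C t w + S t x) \<in> D"
    and generator_sine_orbit:
      "A (S s (C t w + S t x)) = C t (A (S s w)) + (1/2) *\<^sub>R (C (t + s) x - C (t - s) x)"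
proof -
  have "S s (C t w + S t x) = C t (S s w) + S s (S t x)"
    by (simp add: sine_add sine_cosine_commute)
  then show "S s (C t w + S t x) \<in> D"
    and "A (S s (C t w + S t x)) = C t (A (S s w)) + (1/2) *\<^sub>R (C (t + s) x - C (t - s) x)"
    using assms by (simp_all add: domain_add domain_cosine sine_sine_in_domain
        generator_add generator_cosine generator_sine_sine)
qed

lemma phase_space_orbit:
  assumes w: "w \<in> phase_space C D A"
  shows "C t w + S t x \<in> phase_space C D A"
  unfolding phase_space_def
proof (intro CollectI conjI ballI)
  have Sw: "S s w \<in> D" if "s \<in> {0..1}" for s
    using w that by (simp add: phase_space_def)
  show "S s (C t w + S t x) \<in> D" if "s \<in> {0..1}" for s
    using Sw[OF that] by (rule sine_orbit_in_domain)
  show "continuous_on {0..1} (\<lambda>s. S s (C t w + S t x))"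
    by (rule continuous_on_sine)
  have "continuous_on {0..1} (\<lambda>s. C t (A (S s w)) + (1/2) *\<^sub>R (C (t + s) x - C (t - s) x))"
    using w by (intro continuous_intros bounded_linear.continuous_on[OF cosine_bounded_linear])
      (simp_all add: phase_space_def)
  then show "continuous_on {0..1} (\<lambda>s. A (S s (C t w + S t x)))"
    by (rule continuous_on_cong[THEN iffD1, rotated 2]) (simp_all add: Sw generator_sine_orbit)
qed

lemma phase_seminorm_orbit_le:
  assumes w: "w \<in> phase_space C D A"
  shows "phase_seminorm (C t w + S t x)
    \<le> M * exp (\<omega> * \<bar>t\<bar>) * phase_seminorm w + M * exp \<omega> * exp (\<omega> * \<bar>t\<bar>) * norm x"
  unfolding phase_seminorm_def[of "C t w + S t x"]
proof (rule cSUP_least)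
  fix s :: real assume s: "s \<in> {0..1}"
  have cosine_near_t: "norm (C r x) \<le> M * exp \<omega> * exp (\<omega> * \<bar>t\<bar>) * norm x"
    if "\<bar>r\<bar> \<le> \<bar>t\<bar> + 1" for r
  proof -
    have "\<omega> * \<bar>r\<bar> \<le> \<omega> * (\<bar>t\<bar> + 1)"
      using that omega_pos by (intro mult_left_mono) auto
    then have "exp (\<omega> * \<bar>r\<bar>) \<le> exp \<omega> * exp (\<omega> * \<bar>t\<bar>)"
      by (simp add: algebra_simps flip: exp_add)
    then have "M * exp (\<omega> * \<bar>r\<bar>) * norm x \<le> M * (exp \<omega> * exp (\<omega> * \<bar>t\<bar>)) * norm x"
      using M_nonneg by (intro mult_right_mono mult_left_mono) auto
    then show ?thesis
      using norm_cosine_le[of r x] by (simp add: mult.assoc)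
  qed
  have "norm (C t (A (S s w))) \<le> M * exp (\<omega> * \<bar>t\<bar>) * phase_seminorm w"
    using norm_cosine_le[of t "A (S s w)"] norm_generator_sine_le_phase_seminorm[OF w s] M_nonneg
    by (simp add: order_trans mult_left_mono)
  moreover have "norm (C (t + s) x - C (t - s) x) \<le> 2 * (M * exp \<omega> * exp (\<omega> * \<bar>t\<bar>) * norm x)"
  proof -
    have "norm (C (t + s) x) \<le> M * exp \<omega> * exp (\<omega> * \<bar>t\<bar>) * norm x"
      and "norm (C (t - s) x) \<le> M * exp \<omega> * exp (\<omega> * \<bar>t\<bar>) * norm x"
      using s by (auto intro!: cosine_near_t)
    then show ?thesis
      using norm_triangle_ineq4[of "C (t + s) x" "C (t - s) x"] by linarith
  qed
  ultimately show "norm (A (S s (C t w + S t x)))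
      \<le> M * exp (\<omega> * \<bar>t\<bar>) * phase_seminorm w + M * exp \<omega> * exp (\<omega> * \<bar>t\<bar>) * norm x"
    using w s norm_triangle_ineq[of "C t (A (S s w))" "(1/2) *\<^sub>R (C (t + s) x - C (t - s) x)"]
    by (simp add: phase_space_def generator_sine_orbit)
qed simp

lemma phase_norm_orbit_le:
  assumes w: "w \<in> phase_space C D A"
  shows "phase_norm C A (C t w + S t x)
    \<le> M * exp (\<omega> * \<bar>t\<bar>) * phase_norm C A w + M * (1 / \<omega> + exp \<omega>) * exp (\<omega> * \<bar>t\<bar>) * norm x"
proof -
  have "norm (C t w + S t x) \<le> M * exp (\<omega> * \<bar>t\<bar>) * norm w + M / \<omega> * exp (\<omega> * \<bar>t\<bar>) * norm x"
    using norm_triangle_ineq[of "C t w" "S t x"] norm_cosine_le[of t w] norm_sine_le[of t x]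
    by simp
  then show ?thesis
    using phase_seminorm_orbit_le[OF w, of t x] by (simp add: phase_norm_eq algebra_simps)
qed

lemma product_norm_orbit_le:
  assumes "M \<ge> 1" and w: "w \<in> phase_space C D A"
  shows "phase_norm C A (C t w + S t x) + norm (A (S t w) + C t x)
    \<le> M * max (2 + M / sinh (\<omega> / 2)) (1 + 1 / \<omega> + exp \<omega>) * exp (\<omega> * \<bar>t\<bar>)
      * (phase_norm C A w + norm x)"
proof -
  define E where "E = exp (\<omega> * \<bar>t\<bar>)"
  define c where "c = M / sinh (\<omega> / 2)"
  define m where "m = max (2 + c) (1 + 1 / \<omega> + exp \<omega>)"
  define N where "N = phase_norm C A w"
  have "E \<ge> 1" "c \<ge> 0"
    using omega_pos \<open>M \<ge> 1\<close> by (simp_all add: E_def c_def)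
  have "M * E \<ge> 1"
    using mult_mono[OF \<open>M \<ge> 1\<close> \<open>E \<ge> 1\<close>] \<open>M \<ge> 1\<close> by simp
  have "c * E \<le> M * c * E"
    using mult_right_mono[OF \<open>M \<ge> 1\<close>, of "c * E"] \<open>c \<ge> 0\<close> \<open>E \<ge> 1\<close> by (simp add: mult.assoc)
  then have constant_le: "1 + c * E \<le> M * (1 + c) * E"
    using \<open>M * E \<ge> 1\<close> by (simp add: algebra_simps)
  have P: "0 \<le> phase_seminorm w" "phase_seminorm w \<le> N"
    using phase_seminorm_nonneg[OF w] by (simp_all add: N_def phase_norm_eq)
  have "0 \<le> M * (1 + c) * E"
    using \<open>M \<ge> 1\<close> \<open>c \<ge> 0\<close> \<open>E \<ge> 1\<close> by simp
  then have second_row: "(1 + c * E) * phase_seminorm w \<le> M * (1 + c) * E * N"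
    using order_trans[OF mult_right_mono[OF constant_le P(1)] mult_left_mono[OF P(2)]] by simp
  have "phase_norm C A (C t w + S t x) + norm (A (S t w) + C t x)
      \<le> (M * E * N + M * (1 / \<omega> + exp \<omega>) * E * norm x)
        + ((1 + c * E) * phase_seminorm w + M * E * norm x)"
    using phase_norm_orbit_le[OF w, of t x] norm_triangle_ineq[of "A (S t w)" "C t x"]
      norm_generator_sine_phase_le[OF w, of t] norm_cosine_le[of t x]
    by (simp add: E_def c_def N_def)
  also have "\<dots> \<le> M * (2 + c) * E * N + M * (1 + 1 / \<omega> + exp \<omega>) * E * norm x"
    using second_row by (simp add: algebra_simps)
  also have "\<dots> \<le> M * m * E * N + M * m * E * norm x"
    using \<open>M \<ge> 1\<close> \<open>E \<ge> 1\<close> phase_seminorm_nonneg[OF w]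
    by (intro add_mono mult_right_mono mult_left_mono) (auto simp: m_def N_def phase_norm_eq)
  finally show ?thesis
    by (simp add: E_def c_def m_def N_def algebra_simps)
qed

end

theorem lemma2p3:
  fixes C :: "real \<Rightarrow> 'a::banach \<Rightarrow> 'a" and D :: "'a set" and A :: "'a \<Rightarrow> 'a"
    and M \<omega> :: real
  assumes "cosine_family C"
    and "cosine_generator C D A"
    and "M \<ge> 1" and "\<omega> > 0"
    and "\<forall>t. onorm (C t) \<le> M * exp (\<omega> * \<bar>t\<bar>)"
  shows "\<forall>t w x. w \<in> phase_space C D A \<longrightarrow>
           C t w + sine_family C t x \<in> phase_space C D A \<and>
           sine_family C t w \<in> D \<and>
           phase_norm C A (C t w + sine_family C t x) + norm (A (sine_family C t w) + C t x)
             \<le> M * max (2 + M / sinh (\<omega> / 2)) (1 + 1 / \<omega> + exp \<omega>) * exp (\<omega> * \<bar>t\<bar>)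
               * (phase_norm C A w + norm x)"
proof -
  obtain l0 where l0: "\<forall>l>l0.
      (\<forall>y\<in>D. \<forall>z\<in>D. l\<^sup>2 *\<^sub>R y - A y = l\<^sup>2 *\<^sub>R z - A z \<longrightarrow> y = z) \<and>
      (\<forall>x. \<exists>y\<in>D. l\<^sup>2 *\<^sub>R y - A y = x \<and>
        ((\<lambda>t. exp (- l * t) *\<^sub>R C t x) has_integral (l *\<^sub>R y)) {0..})"
    using assms(2) unfolding cosine_generator_def by blast
  interpret cosine_resolvent C M \<omega> D A "\<bar>l0\<bar> + \<omega> + 1"
    using assms l0[rule_format, of "\<bar>l0\<bar> + \<omega> + 1"] by unfold_locales auto
  show ?thesis
    using phase_space_orbit sine_phase_in_domain product_norm_orbit_le[OF assms(3)] by simp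
qed

end
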